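(* Let $A \subset \mathbb{Z}$ be a finite set with $\min A = 0$, $\max A = b$, and $\gcd A = 1$. Let $\mathcal{C}_A = \{\sum_{a \in A} n_a (a,1) : n_a \in \mathbb{N}\} \subset \mathbb{Z}^2$, $\Lambda = \{(bn, m+n) : m,n \in \mathbb{Z}\}$, and $\Lambda^+ = \{(bn, m+n) : m,n \in \mathbb{N}\}$. For $a \in \{0,1,\ldots,b-1\}$ let $\mathcal{S}_a$ be the set of points of $\mathcal{C}_A$ congruent to $(a,1)$ modulo $\Lambda$. Then for each $a \in \{0,1,\ldots,b-1\}$ there exists a unique $(g_a,h_a) \in \mathbb{N}^2$ such that $\mathcal{S}_a \subseteq (g_a,h_a) + \Lambda^+$ and the set \[ E_a := \big((g_a,h_a) + \Lambda^+\big) \setminus \mathcal{S}_a \] is finite.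
   Context: $\mathbb{N} = \{0,1,2,\ldots\}$. The point $(g_a,h_a)$ is called the virtual generator of $\mathcal{S}_a$ and $E_a$ its extraneous set. *)

theory Defs
  imports Main
begin

definition cone_A :: "int set \<Rightarrow> (int \<times> int) set" where
  "cone_A A = {(\<Sum>a\<in>A. int (n a) * a, \<Sum>a\<in>A. int (n a)) | n :: int \<Rightarrow> nat. True}"

definition lattice_L :: "int \<Rightarrow> (int \<times> int) set" where
  "lattice_L b = {(b * n, m + n) | m n :: int. True}"

definition lattice_Lplus :: "int \<Rightarrow> (int \<times> int) set" where
  "lattice_Lplus b = {(b * int n, int m + int n) | m n :: nat. True}"

definition S_class :: "int set \<Rightarrow> int \<Rightarrow> int \<Rightarrow> (int \<times> int) set" where
  "S_class A b a = {p \<in> cone_A A. (fst p - a, snd p - 1) \<in> lattice_L b}"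

definition translate :: "int \<times> int \<Rightarrow> (int \<times> int) set \<Rightarrow> (int \<times> int) set" where
  "translate v X = (\<lambda>p. (fst v + fst p, snd v + snd p)) ` X"

end

theory Submission
  imports Defs
begin

text \<open>
  Write the points of \<open>S\<^sub>a\<close> as \<open>(a + b j, j + v)\<close>. Because the cone lies in
  \<open>0 \<le> x \<le> b y\<close>, both coordinates \<open>j\<close> and \<open>v\<close> are natural numbers, and because
  \<open>(0,1)\<close> and \<open>(b,1)\<close> are generators, \<open>S\<^sub>a\<close> is closed under adding \<open>\<Lambda>\<^sup>+\<close>; by Bezout
  (\<open>gcd A = 1\<close>) it is nonempty. In the coordinates \<open>(j, v)\<close> it is thus a nonempty
  up-closed subset of \<open>\<nat>\<^sup>2\<close>, which fills the quadrant above its componentwise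
  minimum \<open>(j\<^sub>0, v\<^sub>0)\<close> up to finitely many points, namely those below the two
  points realising \<open>j\<^sub>0\<close> and \<open>v\<^sub>0\<close>. Uniqueness: if \<open>S\<^sub>a\<close> is cofinite in \<open>p + \<Lambda>\<^sup>+\<close>,
  the two infinite rays of \<open>p + \<Lambda>\<^sup>+\<close> meet \<open>S\<^sub>a\<close>, which forces \<open>p \<in> q + \<Lambda>\<^sup>+\<close> for any
  \<open>q + \<Lambda>\<^sup>+ \<supseteq> S\<^sub>a\<close>; and \<open>\<Lambda>\<^sup>+\<close> contains no nonzero pair of opposite vectors.
\<close>

lemma Gcd_int_linear_combination:
  assumes "finite (A :: int set)"
  shows "\<exists>c. (\<Sum>x\<in>A. c x * x) = Gcd A"
  using assms
proof (induction A rule: finite_induct)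
  case empty
  then show ?case by simp
next
  case (insert z A)
  then obtain c where c: "(\<Sum>x\<in>A. c x * x) = Gcd A" by blast
  obtain u v where uv: "u * z + v * Gcd A = gcd z (Gcd A)" using bezout_int by blast
  define c' where "c' = (\<lambda>x. if x = z then u else v * c x)"
  have "(\<Sum>x\<in>A. c' x * x) = (\<Sum>x\<in>A. v * (c x * x))"
    by (rule sum.cong) (use insert in \<open>auto simp: c'_def\<close>)
  then have "(\<Sum>x\<in>insert z A. c' x * x) = u * z + v * Gcd A"
    using insert by (simp add: c'_def sum_distrib_left[symmetric] c)
  then show ?case using uv by auto
qed

lemma translate_lattice_Lplus_iff:
  "q \<in> translate p (lattice_Lplus b) \<longleftrightarrow>
     (\<exists>n m :: nat. q = (fst p + b * int n, snd p + int m + int n))"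
proof
  assume "q \<in> translate p (lattice_Lplus b)"
  then obtain r where r: "r \<in> lattice_Lplus b" "q = (fst p + fst r, snd p + snd r)"
    unfolding translate_def by blast
  then obtain n m :: nat where "q = (fst p + b * int n, snd p + (int m + int n))"
    unfolding lattice_Lplus_def by force
  then show "\<exists>n m :: nat. q = (fst p + b * int n, snd p + int m + int n)"
    by (auto simp: add.assoc)
next
  assume "\<exists>n m :: nat. q = (fst p + b * int n, snd p + int m + int n)"
  then obtain n m :: nat where q: "q = (fst p + b * int n, snd p + int m + int n)" by blast
  have "(b * int n, int m + int n) \<in> lattice_Lplus b" unfolding lattice_Lplus_def by blast
  then show "q \<in> translate p (lattice_Lplus b)" unfolding translate_def q
    by (rule rev_image_eqI) (simp add: add.assoc)
qed

lemma translate_lattice_Lplus_eq_image: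
  "translate (x + b * int u, y + int v + int u) (lattice_Lplus b) =
     (\<lambda>(n, m). (x + b * int n, y + int m + int n)) ` ({u..} \<times> {v..})"
proof (intro set_eqI iffI)
  fix q assume "q \<in> translate (x + b * int u, y + int v + int u) (lattice_Lplus b)"
  then obtain n m :: nat where "q = (x + b * int (u + n), y + int (v + m) + int (u + n))"
    unfolding translate_lattice_Lplus_iff by (auto simp: algebra_simps)
  then show "q \<in> (\<lambda>(n, m). (x + b * int n, y + int m + int n)) ` ({u..} \<times> {v..})"
    by (intro rev_image_eqI[of "(u + n, v + m)"]) auto
next
  fix q assume "q \<in> (\<lambda>(n, m). (x + b * int n, y + int m + int n)) ` ({u..} \<times> {v..})"
  then obtain n m where "u \<le> n" "v \<le> m" "q = (x + b * int n, y + int m + int n)" by auto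
  then have "q = (x + b * int u + b * int (n - u), y + int v + int u + int (m - v) + int (n - u))"
    by (simp add: algebra_simps)
  then show "q \<in> translate (x + b * int u, y + int v + int u) (lattice_Lplus b)"
    unfolding translate_lattice_Lplus_iff fst_conv snd_conv by blast
qed

lemma up_closed_cofinite_in_quadrant:
  fixes U :: "(nat \<times> nat) set"
  assumes "U \<noteq> {}"
    and up: "\<And>n m n' m'. (n, m) \<in> U \<Longrightarrow> n \<le> n' \<Longrightarrow> m \<le> m' \<Longrightarrow> (n', m') \<in> U"
  obtains u v where "U \<subseteq> {u..} \<times> {v..}" and "finite ({u..} \<times> {v..} - U)"
proof -
  obtain p1 where p1: "p1 \<in> U" and min_fst: "\<forall>p\<in>U. fst p1 \<le> fst p"
    using ex_has_least_nat[of "\<lambda>p. p \<in> U" _ fst] assms(1) by blast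
  obtain p2 where p2: "p2 \<in> U" and min_snd: "\<forall>p\<in>U. snd p2 \<le> snd p"
    using ex_has_least_nat[of "\<lambda>p. p \<in> U" _ snd] assms(1) by blast
  let ?Q = "{fst p1..} \<times> {snd p2..}"
  have "U \<subseteq> ?Q" using min_fst min_snd by auto
  moreover have "(n, m) \<in> {..<fst p2} \<times> {..<snd p1}" if nm: "(n, m) \<in> ?Q - U" for n m
  proof -
    have "\<not> fst p2 \<le> n" using up[of "fst p2" "snd p2" n m] p2 nm by auto
    moreover have "\<not> snd p1 \<le> m" using up[of "fst p1" "snd p1" n m] p1 nm by auto
    ultimately show ?thesis by simp
  qed
  then have "?Q - U \<subseteq> {..<fst p2} \<times> {..<snd p1}" by auto
  then have "finite (?Q - U)" by (rule finite_subset) auto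
  ultimately show thesis by (rule that)
qed

lemma translate_lattice_Lplus_cofinite_exists:
  assumes "S \<noteq> {}" and "S \<subseteq> translate (x, y) (lattice_Lplus b)"
    and closed: "\<And>p. p \<in> S \<Longrightarrow> translate p (lattice_Lplus b) \<subseteq> S"
  obtains u v :: nat
  where "S \<subseteq> translate (x + b * int u, y + int v + int u) (lattice_Lplus b)"
    and "finite (translate (x + b * int u, y + int v + int u) (lattice_Lplus b) - S)"
proof -
  define \<Phi> where "\<Phi> = (\<lambda>(n :: nat, m :: nat). (x + b * int n, y + int m + int n))"
  have T: "translate (x + b * int u, y + int v + int u) (lattice_Lplus b) = \<Phi> ` ({u..} \<times> {v..})"
    for u v using translate_lattice_Lplus_eq_image unfolding \<Phi>_def .
  have "translate (x, y) (lattice_Lplus b) = range \<Phi>"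
    using T[of 0 0] by simp
  then have S: "S = \<Phi> ` (\<Phi> -` S)" using assms(2) by auto
  have "\<Phi> -` S \<noteq> {}" using S assms(1) by (metis image_empty)
  moreover have "(n', m') \<in> \<Phi> -` S"
    if "(n, m) \<in> \<Phi> -` S" "n \<le> n'" "m \<le> m'" for n m n' m'
  proof -
    have "\<Phi> (n', m') \<in> translate (\<Phi> (n, m)) (lattice_Lplus b)"
      using T[of n m] that(2,3) by (auto simp: \<Phi>_def intro: rev_image_eqI[of "(n', m')"])
    then show ?thesis using closed[of "\<Phi> (n, m)"] that(1) by auto
  qed
  ultimately obtain u v where "\<Phi> -` S \<subseteq> {u..} \<times> {v..}" "finite ({u..} \<times> {v..} - \<Phi> -` S)"
    using up_closed_cofinite_in_quadrant by metis
  moreover have "\<Phi> ` ({u..} \<times> {v..}) - S \<subseteq> \<Phi> ` ({u..} \<times> {v..} - \<Phi> -` S)"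
    by (subst (1) S) (rule image_diff_subset)
  ultimately show thesis
    using that[of u v] finite_subset S unfolding T by (metis finite_imageI image_mono)
qed

lemma mem_translate_lattice_Lplus_of_cofinite:
  assumes "b \<noteq> 0"
    and "S \<subseteq> translate q (lattice_Lplus b)"
    and fin: "finite (translate (x, y) (lattice_Lplus b) - S)"
  shows "(x, y) \<in> translate q (lattice_Lplus b)"
proof -
  have meets_S: "\<exists>k. f k \<in> S"
    if "inj f" and "\<And>k. f k \<in> translate (x, y) (lattice_Lplus b)" for f :: "nat \<Rightarrow> int \<times> int"
  proof (rule ccontr)
    assume "\<nexists>k. f k \<in> S"
    then have "range f \<subseteq> translate (x, y) (lattice_Lplus b) - S" using that(2) by auto
    then show False
      using fin finite_subset finite_imageD[OF _ inj_on_subset[OF that(1)]] by blast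
  qed
  have "inj (\<lambda>m :: nat. (x, y + int m))" by (auto simp: inj_def)
  moreover have "(x, y + int m) \<in> translate (x, y) (lattice_Lplus b)" for m
    unfolding translate_lattice_Lplus_iff by (rule exI[of _ 0], rule exI[of _ m]) simp
  ultimately obtain m where "(x, y + int m) \<in> S" using meets_S by blast
  then have "(x, y + int m) \<in> translate q (lattice_Lplus b)" using assms(2) by blast
  then obtain n1 :: nat where n1: "x = fst q + b * int n1"
    unfolding translate_lattice_Lplus_iff by auto
  have "inj (\<lambda>n :: nat. (x + b * int n, y + int n))" by (auto simp: inj_def)
  moreover have "(x + b * int n, y + int n) \<in> translate (x, y) (lattice_Lplus b)" for n
    unfolding translate_lattice_Lplus_iff by (rule exI[of _ n], rule exI[of _ 0]) simp
  ultimately obtain n where "(x + b * int n, y + int n) \<in> S" using meets_S by blast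
  then have "(x + b * int n, y + int n) \<in> translate q (lattice_Lplus b)" using assms(2) by blast
  then obtain n2 m2 :: nat
    where n2: "x + b * int n = fst q + b * int n2" "y + int n = snd q + int m2 + int n2"
    unfolding translate_lattice_Lplus_iff by auto
  have "b * (int n1 + int n) = b * int n2" using n1 n2(1) by (simp add: algebra_simps)
  then have "y = snd q + int m2 + int n1" using n2(2) assms(1) by simp
  then show ?thesis
    using n1 unfolding translate_lattice_Lplus_iff by auto
qed

lemma translate_lattice_Lplus_antisym:
  assumes "b \<noteq> 0"
    and "p \<in> translate q (lattice_Lplus b)" and "q \<in> translate p (lattice_Lplus b)"
  shows "p = q"
proof -
  obtain n m n' m' :: nat where p: "p = (fst q + b * int n, snd q + int m + int n)"
    and q: "q = (fst p + b * int n', snd p + int m' + int n')"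
    using assms(2,3) unfolding translate_lattice_Lplus_iff by blast
  then have "b * (int n + int n') = 0" and "int m + int n + (int m' + int n') = 0"
    by (auto simp: algebra_simps prod_eq_iff)
  then have "n = 0" and "m = 0" using assms(1) by auto
  then show ?thesis using p by simp
qed

lemma translate_lattice_Lplus_cofinite_unique:
  assumes "b \<noteq> 0"
    and "S \<subseteq> translate p (lattice_Lplus b)" and "finite (translate p (lattice_Lplus b) - S)"
    and "S \<subseteq> translate q (lattice_Lplus b)" and "finite (translate q (lattice_Lplus b) - S)"
  shows "p = q"
  using translate_lattice_Lplus_antisym[OF assms(1)]
    mem_translate_lattice_Lplus_of_cofinite[OF assms(1,4), of "fst p" "snd p"]
    mem_translate_lattice_Lplus_of_cofinite[OF assms(1,2), of "fst q" "snd q"] assms(3,5)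
  by simp

lemma cone_A_memI: "(\<Sum>a\<in>A. int (n a) * a, \<Sum>a\<in>A. int (n a)) \<in> cone_A A"
  unfolding cone_A_def by blast

lemma cone_A_add:
  assumes "p \<in> cone_A A" and "q \<in> cone_A A"
  shows "(fst p + fst q, snd p + snd q) \<in> cone_A A"
proof -
  obtain n n' where "p = (\<Sum>a\<in>A. int (n a) * a, \<Sum>a\<in>A. int (n a))"
    and "q = (\<Sum>a\<in>A. int (n' a) * a, \<Sum>a\<in>A. int (n' a))"
    using assms unfolding cone_A_def by blast
  then have "(fst p + fst q, snd p + snd q) =
      (\<Sum>a\<in>A. int (n a + n' a) * a, \<Sum>a\<in>A. int (n a + n' a))"
    by (simp add: sum.distrib distrib_right)
  then show ?thesis using cone_A_memI[of "\<lambda>a. n a + n' a"] by simp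
qed

lemma cone_A_generator_multiple:
  assumes "finite A" and "z \<in> A"
  shows "(int k * z, int k) \<in> cone_A A"
proof -
  have "(\<Sum>a\<in>A. int (if a = z then k else 0) * a) = int k * z"
    and "(\<Sum>a\<in>A. int (if a = z then k else 0)) = int k"
    using assms by (simp_all add: if_distrib[of int] if_distrib[of "\<lambda>t. t * _"] cong: if_cong)
  then show ?thesis using cone_A_memI[of "\<lambda>a. if a = z then k else 0" A] by simp
qed

lemma lattice_Lplus_subset_cone_A:
  assumes "finite A" and "0 \<in> A" and "b \<in> A"
  shows "lattice_Lplus b \<subseteq> cone_A A"
proof
  fix q assume "q \<in> lattice_Lplus b"
  then obtain n m :: nat where q: "q = (b * int n, int m + int n)"
    unfolding lattice_Lplus_def by blast
  have "(int m * 0 + int n * b, int m + int n) \<in> cone_A A"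
    using cone_A_add[OF cone_A_generator_multiple[OF assms(1,2)] cone_A_generator_multiple[OF assms(1,3)]]
    by simp
  then show "q \<in> cone_A A" by (simp add: q mult.commute)
qed

lemma cone_A_bounds:
  assumes "p \<in> cone_A A" and "A \<subseteq> {0..b}"
  shows "0 \<le> fst p \<and> fst p \<le> b * snd p"
proof -
  obtain n where p: "p = (\<Sum>a\<in>A. int (n a) * a, \<Sum>a\<in>A. int (n a))"
    using assms(1) unfolding cone_A_def by blast
  have "0 \<le> (\<Sum>a\<in>A. int (n a) * a)" using assms(2) by (intro sum_nonneg) auto
  moreover have "(\<Sum>a\<in>A. int (n a) * a) \<le> (\<Sum>a\<in>A. int (n a) * b)"
    using assms(2) by (intro sum_mono mult_left_mono) auto
  ultimately show ?thesis using p by (simp add: sum_distrib_left mult.commute)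
qed

lemma S_class_iff: "p \<in> S_class A b a \<longleftrightarrow> p \<in> cone_A A \<and> b dvd fst p - a"
proof -
  have "(x, y) \<in> lattice_L b \<longleftrightarrow> b dvd x" for x y
  proof
    assume "b dvd x"
    then obtain k where "x = b * k" by blast
    then show "(x, y) \<in> lattice_L b" unfolding lattice_L_def
      by (intro CollectI exI[of _ "y - k"] exI[of _ k]) auto
  qed (auto simp: lattice_L_def)
  then show ?thesis unfolding S_class_def by simp
qed

lemma S_class_nonempty:
  assumes "finite A" and "Gcd A = 1" and "b > 0"
  shows "S_class A b a \<noteq> {}"
proof -
  obtain c where c: "(\<Sum>x\<in>A. c x * x) = 1"
    using Gcd_int_linear_combination[OF assms(1)] assms(2) by auto
  \<comment> \<open>reducing the Bezout coefficients of \<open>a\<close> mod \<open>b\<close> makes them natural numbers\<close>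
  define n where "n x = nat ((a * c x) mod b)" for x
  have n: "int (n x) = (a * c x) mod b" for x using assms(3) by (simp add: n_def)
  let ?p = "(\<Sum>x\<in>A. int (n x) * x, \<Sum>x\<in>A. int (n x))"
  have "(\<Sum>x\<in>A. int (n x) * x) mod b = (\<Sum>x\<in>A. (a * c x) mod b * x mod b) mod b"
    by (simp add: n mod_sum_eq)
  also have "\<dots> = (\<Sum>x\<in>A. a * (c x * x)) mod b"
    by (simp add: mod_mult_left_eq mod_sum_eq mult.assoc)
  also have "\<dots> = a mod b" by (simp add: sum_distrib_left[symmetric] c)
  finally have "?p \<in> S_class A b a"
    unfolding S_class_iff cone_A_def by (auto simp: mod_eq_dvd_iff)
  then show ?thesis by blast
qed

lemma S_class_subset_translate:
  assumes "A \<subseteq> {0..b}" and "0 \<le> a" and "a < b"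
  shows "S_class A b a \<subseteq> translate (a, 0) (lattice_Lplus b)"
proof
  fix p assume "p \<in> S_class A b a"
  then have "b dvd fst p - a" and bounds: "0 \<le> fst p" "fst p \<le> b * snd p"
    using cone_A_bounds[OF _ assms(1)] by (auto simp: S_class_iff)
  from this(1) obtain j where "fst p - a = b * j" by (rule dvdE)
  then have j: "fst p = a + b * j" by simp
  have "0 < b * (j + 1)" using bounds(1) j assms(3) by (simp add: algebra_simps)
  then have "0 \<le> j" using assms by (simp add: zero_less_mult_iff)
  moreover have "b * j \<le> b * snd p" using bounds(2) j assms(2) by simp
  then have "j \<le> snd p" using assms by simp
  ultimately have "p = (a + b * int (nat j), 0 + int (nat (snd p - j)) + int (nat j))"
    using j by (simp add: prod_eq_iff)
  then show "p \<in> translate (a, 0) (lattice_Lplus b)"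
    unfolding translate_lattice_Lplus_iff fst_conv snd_conv by blast
qed

lemma S_class_translate_closed:
  assumes "finite A" and "0 \<in> A" and "b \<in> A" and "p \<in> S_class A b a"
  shows "translate p (lattice_Lplus b) \<subseteq> S_class A b a"
proof
  fix q assume "q \<in> translate p (lattice_Lplus b)"
  then obtain n m :: nat where q: "q = (fst p + b * int n, snd p + int m + int n)"
    unfolding translate_lattice_Lplus_iff by blast
  have "(b * int n, int m + int n) \<in> cone_A A"
    using lattice_Lplus_subset_cone_A[OF assms(1-3)] unfolding lattice_Lplus_def by blast
  from cone_A_add[OF _ this, of p] have "q \<in> cone_A A"
    using assms(4) by (simp add: q S_class_iff add.assoc)
  moreover have "fst q - a = (fst p - a) + b * int n" by (simp add: q)
  then have "b dvd fst q - a"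
    using assms(4) unfolding S_class_iff by (metis dvd_add dvd_triv_left)
  ultimately show "q \<in> S_class A b a" by (simp add: S_class_iff)
qed

theorem proposition5p2:
  fixes A :: "int set" and b :: int
  assumes "finite A" and "A \<noteq> {}" and "Min A = 0" and "Max A = b" and "Gcd A = 1"
  shows "\<forall>a \<in> {0..<b}. \<exists>!gh :: nat \<times> nat.
           S_class A b a \<subseteq> translate (int (fst gh), int (snd gh)) (lattice_Lplus b)
         \<and> finite (translate (int (fst gh), int (snd gh)) (lattice_Lplus b) - S_class A b a)"
proof
  fix a assume "a \<in> {0..<b}"
  then have a: "0 \<le> a" "a < b" and b: "b > 0" by auto
  have A: "A \<subseteq> {0..b}" "0 \<in> A" "b \<in> A"
    using assms Min_le Max_ge Min_in Max_in by fastforce+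
  obtain u v :: nat
    where "S_class A b a \<subseteq> translate (a + b * int u, 0 + int v + int u) (lattice_Lplus b)"
      and "finite (translate (a + b * int u, 0 + int v + int u) (lattice_Lplus b) - S_class A b a)"
    using translate_lattice_Lplus_cofinite_exists[OF S_class_nonempty[OF assms(1,5) b]
        S_class_subset_translate[OF A(1) a] S_class_translate_closed[OF assms(1) A(2,3)]] .
  moreover have "(a + b * int u, 0 + int v + int u) = (int (nat (a + b * int u)), int (v + u))"
    using a b by simp
  ultimately have char: "S_class A b a \<subseteq> translate (int (fst gh), int (snd gh)) (lattice_Lplus b)
      \<and> finite (translate (int (fst gh), int (snd gh)) (lattice_Lplus b) - S_class A b a)
    \<longleftrightarrow> gh = (nat (a + b * int u), v + u)" for gh :: "nat \<times> nat"
    using translate_lattice_Lplus_cofinite_unique[of b "S_class A b a"] b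
    by (cases gh) fastforce
  then show "\<exists>!gh :: nat \<times> nat.
           S_class A b a \<subseteq> translate (int (fst gh), int (snd gh)) (lattice_Lplus b)
         \<and> finite (translate (int (fst gh), int (snd gh)) (lattice_Lplus b) - S_class A b a)"
    unfolding char by simp
qed

end
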